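(* Let $n$ be a positive integer and let $A(n)=(a_{ij})_{i,j\in\mathbb{N}}$ be the greedy matrix described in the context. Then $A(n)$ is symmetric: $a_{ij}=a_{ji}$ for all $i,j\geq 1$.
   Context: $\mathbb{N}=\{1,2,3,\dots\}$. Fix a positive integer $n$. The infinite $\{0,1\}$-matrix $A(n)=(a_{ij})_{i,j\in\mathbb{N}}$ is defined recursively. Its entries are determined row by row (row $1$ first), and within each row from left to right, so that $a_{kl}$ is determined after all $a_{ij}$ with $i<k$ and all $a_{kj}$ with $j<l$. One sets $a_{kl}=1$ if and only if all of the following hold: (1) $\sum_{j<l}a_{kj}<n+1$; (2) $\sum_{i<k}a_{il}<n+1$; (3) there is no pair $(i,j)$ with $1\le i<k$, $1\le j<l$ and $a_{ij}=a_{il}=a_{kj}=1$. Otherwise $a_{kl}=0$. *)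

theory Defs
  imports Main
begin

text \<open>The greedy matrix A(n), indices from 1; entries at index 0 are irrelevant.
  A function a satisfies the recursive definition iff every entry a k l (k,l \<ge> 1)
  equals the value prescribed by the rule from earlier entries; such a function
  exists and is unique on indices \<ge> 1.\<close>
definition greedy_matrix :: "nat \<Rightarrow> (nat \<Rightarrow> nat \<Rightarrow> nat) \<Rightarrow> bool" where
  "greedy_matrix n a \<longleftrightarrow>
     (\<forall>k\<ge>1. \<forall>l\<ge>1. a k l =
        (if (\<Sum>j\<in>{1..<l}. a k j) < n + 1
            \<and> (\<Sum>i\<in>{1..<k}. a i l) < n + 1
            \<and> \<not> (\<exists>i\<in>{1..<k}. \<exists>j\<in>{1..<l}. a i j = 1 \<and> a i l = 1 \<and> a k j = 1)
         then 1 else 0))"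

end

theory Submission
  imports Defs
begin

text \<open>The defining rule is invariant under exchanging the roles of rows and columns, and it
  determines the matrix uniquely because each entry depends only on entries with a smaller
  index sum. Hence the transpose satisfies the same recursion and coincides with the matrix.\<close>

definition greedy_rule :: "nat \<Rightarrow> (nat \<Rightarrow> nat \<Rightarrow> nat) \<Rightarrow> nat \<Rightarrow> nat \<Rightarrow> nat" where
  "greedy_rule n a k l =
     (if (\<Sum>j\<in>{1..<l}. a k j) < n + 1
         \<and> (\<Sum>i\<in>{1..<k}. a i l) < n + 1
         \<and> \<not> (\<exists>i\<in>{1..<k}. \<exists>j\<in>{1..<l}. a i j = 1 \<and> a i l = 1 \<and> a k j = 1)
      then 1 else 0)"

lemma greedy_matrix_iff_rule:
  "greedy_matrix n a \<longleftrightarrow> (\<forall>k\<ge>1. \<forall>l\<ge>1. a k l = greedy_rule n a k l)"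
  unfolding greedy_matrix_def greedy_rule_def by (rule refl)

lemma greedy_matrix_entry:
  assumes "greedy_matrix n a" and "k \<ge> 1" and "l \<ge> 1"
  shows "a k l = greedy_rule n a k l"
  using assms unfolding greedy_matrix_iff_rule by blast

lemma greedy_rule_transpose:
  "greedy_rule n (\<lambda>i j. a j i) k l = greedy_rule n a l k"
proof -
  have swap: "(\<exists>i\<in>{1..<k}. \<exists>j\<in>{1..<l}. a j i = 1 \<and> a l i = 1 \<and> a j k = 1)
      \<longleftrightarrow> (\<exists>i\<in>{1..<l}. \<exists>j\<in>{1..<k}. a i j = 1 \<and> a i k = 1 \<and> a l j = 1)"
    by blast
  show ?thesis
    unfolding greedy_rule_def swap by (simp only: conj_left_commute)
qed

lemma greedy_rule_cong:
  assumes "k \<ge> 1" and "l \<ge> 1"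
    and "\<And>i j. 1 \<le> i \<Longrightarrow> 1 \<le> j \<Longrightarrow> i \<le> k \<Longrightarrow> j \<le> l \<Longrightarrow> i + j < k + l \<Longrightarrow> a i j = b i j"
  shows "greedy_rule n a k l = greedy_rule n b k l"
proof -
  have "(\<Sum>j\<in>{1..<l}. a k j) = (\<Sum>j\<in>{1..<l}. b k j)"
    using assms(1) by (intro sum.cong) (auto intro: assms(3))
  moreover have "(\<Sum>i\<in>{1..<k}. a i l) = (\<Sum>i\<in>{1..<k}. b i l)"
    using assms(2) by (intro sum.cong) (auto intro: assms(3))
  moreover have "(\<exists>i\<in>{1..<k}. \<exists>j\<in>{1..<l}. a i j = 1 \<and> a i l = 1 \<and> a k j = 1)
      \<longleftrightarrow> (\<exists>i\<in>{1..<k}. \<exists>j\<in>{1..<l}. b i j = 1 \<and> b i l = 1 \<and> b k j = 1)"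
    using assms(1,2) by (intro bex_cong refl) (auto simp: assms(3))
  ultimately show ?thesis
    unfolding greedy_rule_def by simp
qed

lemma greedy_matrix_unique:
  assumes "greedy_matrix n a" and "greedy_matrix n b" and "k \<ge> 1" and "l \<ge> 1"
  shows "a k l = b k l"
  using assms(3,4)
proof (induction "k + l" arbitrary: k l rule: less_induct)
  case less
  have "a k l = greedy_rule n a k l"
    using assms(1) less.prems by (rule greedy_matrix_entry)
  also have "\<dots> = greedy_rule n b k l"
    using less by (intro greedy_rule_cong) simp_all
  also have "\<dots> = b k l"
    using assms(2) less.prems by (rule greedy_matrix_entry[symmetric])
  finally show ?case .
qed

lemma greedy_matrix_transpose:
  assumes "greedy_matrix n a"
  shows "greedy_matrix n (\<lambda>i j. a j i)"
  unfolding greedy_matrix_iff_rule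
proof (intro allI impI)
  fix k l :: nat
  assume "k \<ge> 1" and "l \<ge> 1"
  with assms have "a l k = greedy_rule n a l k"
    by (intro greedy_matrix_entry)
  also have "\<dots> = greedy_rule n (\<lambda>i j. a j i) k l"
    by (rule greedy_rule_transpose[symmetric])
  finally show "a l k = greedy_rule n (\<lambda>i j. a j i) k l" .
qed

theorem theorem3p2:
  fixes n :: nat and a :: "nat \<Rightarrow> nat \<Rightarrow> nat"
  assumes "n \<ge> 1" and "greedy_matrix n a"
  shows "\<forall>i\<ge>1. \<forall>j\<ge>1. a i j = a j i"
  using greedy_matrix_unique[OF assms(2) greedy_matrix_transpose[OF assms(2)]] by blast

end
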